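(* A vector $w\in\mathbb{R}^n$, $w\ge0$, is strongly bilevel feasible if and only if both of the following hold: (i) there exists exactly one bilevel feasible decomposition $(w^k)_{k\in\mathcal{K}}$ of $w$; (ii) in this unique decomposition, each $w^k$ is individually strongly bilevel feasible.
   Context: Multi-commodity network pricing setting: $G=(\mathcal{V},\mathcal{A})$ directed graph with arc costs $c\ge0$, nonempty tolled arc set $\mathcal{A}_1\subsetneq\mathcal{A}$, $n=|\mathcal{A}_1|$, $N$ node–arc incidence matrix; finite set $\mathcal{K}$ of commodities, commodity $k$ having origin $o^k$ and destination $d^k$ connected by a path of arcs not in $\mathcal{A}_1$; $b^k_{o^k}=1$, $b^k_{d^k}=-1$, other entries $0$; $\mathcal{X}^k=\{x\in\mathbb{R}^{\mathcal{A}}: Nx=b^k,\ x\ge0\}$; $x_{\mathcal{A}_1}$ is the restriction of $x$ to $\mathcal{A}_1$. For $t\in\mathbb{R}^n$ let $f^k(t)=\min\{c^\top x+t^\top x_{\mathcal{A}_1}: x\in\mathcal{X}^k\}$ if $t\ge0$, $-\infty$ otherwise; $f=\sum_k f^k$; $g^k(w)=\sup_t\{f^k(t)-t^\top w\}$, $g(w)=\sup_t\{f(t)-t^\top w\}$. A vector $w\ge0$ is strongly bilevel feasible if $\{w\}$ is the projection onto $w$-space of a face of $\operatorname{epi}(g)$ whose affine hull's direction space does not contain $(0,1)$ (equivalently $\{(w,g(w))\}$ is a face of $\operatorname{epi}(g)$); $w^k\ge0$ is individually strongly bilevel feasible if the same holds with $g^k$ in place of $g$. A decomposition of $w$ is a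 tuple $(w^k)_{k\in\mathcal{K}}$ of vectors $w^k\ge0$ with $\sum_k w^k=w$; it is bilevel feasible if $g(w)=\sum_k g^k(w^k)$. *)

theory Defs
  imports "HOL-Analysis.Analysis" "HOL-Library.Extended_Real"
begin

text \<open>Arcs are the elements of the finite type ('t + 'u): the tolled arcs A1 are the
  arcs Inl i (indexed by the finite type 't, so R^n = real^'t), the untolled arcs
  are the arcs Inr j. Thus A1 is nonempty and a proper subset of A.\<close>

fun is_path :: "('a \<Rightarrow> 'v) \<Rightarrow> ('a \<Rightarrow> 'v) \<Rightarrow> 'a list \<Rightarrow> 'v \<Rightarrow> 'v \<Rightarrow> bool" where
  "is_path tail head [] v w = (v = w)"
| "is_path tail head (a # as) v w = (tail a = v \<and> is_path tail head as (head a) w)"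

definition supply_vec :: "'v \<Rightarrow> 'v \<Rightarrow> 'v \<Rightarrow> real" where
  "supply_vec o' d v = (if v = o' then 1 else 0) - (if v = d then 1 else 0)"

definition flow_set ::
  "(('t::finite + 'u::finite) \<Rightarrow> 'v) \<Rightarrow> (('t + 'u) \<Rightarrow> 'v) \<Rightarrow> ('v \<Rightarrow> real) \<Rightarrow> (('t + 'u) \<Rightarrow> real) set" where
  "flow_set tail head b = {x. (\<forall>v. (\<Sum>a\<in>{a. tail a = v}. x a) - (\<Sum>a\<in>{a. head a = v}. x a) = b v)
                          \<and> (\<forall>a. 0 \<le> x a)}"

definition nonneg :: "real ^ 't \<Rightarrow> bool" where
  "nonneg t = (\<forall>i. 0 \<le> t $ i)"

definition fk ::
  "(('t::finite + 'u::finite) \<Rightarrow> 'v) \<Rightarrow> (('t + 'u) \<Rightarrow> 'v) \<Rightarrow> (('t + 'u) \<Rightarrow> real)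
   \<Rightarrow> 'v \<Rightarrow> 'v \<Rightarrow> real ^ 't \<Rightarrow> ereal" where
  "fk tail head c o' d t =
     (if nonneg t
      then Inf {ereal ((\<Sum>a\<in>UNIV. c a * x a) + (\<Sum>i\<in>UNIV. t $ i * x (Inl i))) | x.
                  x \<in> flow_set tail head (supply_vec o' d)}
      else -\<infinity>)"

definition conj_fun :: "(real ^ 't \<Rightarrow> ereal) \<Rightarrow> real ^ 't \<Rightarrow> ereal" where
  "conj_fun h w = (SUP t. h t - ereal (\<Sum>i\<in>UNIV. t $ i * w $ i))"

definition epi :: "('b \<Rightarrow> ereal) \<Rightarrow> ('b \<times> real) set" where
  "epi h = {(w, r). h w \<le> ereal r}"

definition direction_space :: "'b::real_vector set \<Rightarrow> 'b set" where
  "direction_space F = {x - y | x y. x \<in> affine hull F \<and> y \<in> affine hull F}"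

text \<open>w is (individually) strongly bilevel feasible w.r.t. h (h = g resp. g^k).\<close>
definition strongly_bf :: "(real ^ 't \<Rightarrow> ereal) \<Rightarrow> real ^ 't \<Rightarrow> bool" where
  "strongly_bf h w = (nonneg w \<and>
     (\<exists>F. F face_of epi h \<and> fst ` F = {w} \<and> (0, 1) \<notin> direction_space F))"

text \<open>Decomposition of w over commodity set K (tuples indexed by K, represented by
  functions that vanish outside K).\<close>
definition decomposition :: "'k set \<Rightarrow> real ^ 't \<Rightarrow> ('k \<Rightarrow> real ^ 't) \<Rightarrow> bool" where
  "decomposition K w W = ((\<forall>k\<in>K. nonneg (W k)) \<and> (\<forall>k. k \<notin> K \<longrightarrow> W k = 0) \<and> (\<Sum>k\<in>K. W k) = w)"

end

theory Submission
  imports Defs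
begin

(* A vector w is strongly bilevel feasible iff (w, g w) is an extreme point of epi g.
   By LP duality, g is the infimal convolution of the g^k: for w >= 0, g w is the minimum of
   sum_k g^k (w^k) over all decompositions of w, and the minimum is attained.  The epigraph of g
   therefore contains every translate of epi g^k obtained by freezing the other components of an
   optimal decomposition.  If (w, g w) is extreme, this makes each (w^k, g^k w^k) extreme, and
   exchanging one component of two different optimal decompositions exhibits (w, g w) as a
   midpoint.  Conversely, if (w, g w) lies on a segment of epi g, mixing optimal decompositions of
   the endpoints gives an optimal decomposition of w, which must be the unique one, and
   extremality of its components forces the endpoints to coincide.  Attainment of the minimum
   comes from separating a point from the closed convex set of attainable (toll, cost) pairs. *)

section \<open>Extreme points of epigraphs\<close>

lemma extreme_point_of_combinationD:
  assumes "x extreme_point_of S" "p \<in> S" "q \<in> S" "0 < u" "u < 1"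
    and "x = (1 - u) *\<^sub>R p + u *\<^sub>R q"
  shows "p = q"
  using assms unfolding extreme_point_of_def in_segment by blast

lemma extreme_point_of_translation_subset:
  assumes "(\<lambda>p. a + p) ` S \<subseteq> T" "x \<in> S" "(a + x) extreme_point_of T"
  shows "x extreme_point_of S"
proof -
  have "(a + x) extreme_point_of (\<lambda>p. a + p) ` S"
    using assms unfolding extreme_point_of_def by blast
  then show ?thesis
    by (simp only: extreme_point_of_translation_eq)
qed

lemma vertical_direction:
  fixes F :: "('a::real_vector \<times> real) set"
  assumes "(w, r) \<in> F" "(w, s) \<in> F" "r \<noteq> s"
  shows "(0, 1) \<in> direction_space F"
proof -
  define m where "m = 1 / (s - r)"
  have hull: "(1 - m) *\<^sub>R (w, r) + m *\<^sub>R (w, s) \<in> affine hull F"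
    using assms by (intro mem_affine affine_affine_hull hull_inc) auto
  have "m * (s - r) = 1"
    using assms(3) by (simp add: m_def)
  then have "(1 - m) * r + m * s = r + 1"
    by (simp add: algebra_simps)
  moreover have "(1 - m) *\<^sub>R w + m *\<^sub>R w = w"
    by (simp flip: scaleR_add_left)
  ultimately have "(w, r + 1) \<in> affine hull F"
    using hull by simp
  moreover have "(w, r) \<in> affine hull F"
    by (rule hull_inc[OF assms(1)])
  ultimately have "(w, r + 1) - (w, r) \<in> direction_space F"
    unfolding direction_space_def by blast
  then show ?thesis
    by simp
qed

lemma extreme_point_of_epi_eq:
  assumes ext: "(w, r) extreme_point_of epi h"
  shows "h w = ereal r"
proof (rule ccontr)
  assume "h w \<noteq> ereal r"
  moreover have "h w \<le> ereal r"
    using ext by (simp add: extreme_point_of_def epi_def)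
  ultimately obtain a where a: "h w < ereal a" "ereal a < ereal r"
    using ereal_dense2 order_le_neq_trans by blast
  have "h w \<le> ereal a"
    using a by simp
  moreover have "ereal a \<le> ereal (2 * r - a)"
    using a by simp
  ultimately have "h w \<le> ereal (2 * r - a)"
    by (rule order.trans)
  with \<open>h w \<le> ereal a\<close> have "(w, a) \<in> epi h" "(w, 2 * r - a) \<in> epi h"
    by (simp_all add: epi_def)
  moreover have "(w, r) = (1 - 1/2) *\<^sub>R (w, a) + (1/2) *\<^sub>R (w, 2 * r - a)"
  proof -
    have "(1 - 1/2) *\<^sub>R w + (1/2::real) *\<^sub>R w = w"
      by (simp flip: scaleR_add_left)
    moreover have "(1 - 1/2) * a + (1/2) * (2 * r - a) = r"
      by (simp add: field_simps)
    ultimately show ?thesis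
      by simp
  qed
  ultimately have "(w, a) = (w, 2 * r - a)"
    using extreme_point_of_combinationD[OF ext, of "(w, a)" "(w, 2 * r - a)" "1/2"] by simp
  then show False
    using a by simp
qed

lemma strongly_bf_iff_extreme_point:
  "strongly_bf h w \<longleftrightarrow> nonneg w \<and> (\<exists>r. h w = ereal r \<and> (w, r) extreme_point_of epi h)"
proof
  assume "strongly_bf h w"
  then obtain F where w: "nonneg w" and F: "F face_of epi h" "fst ` F = {w}"
    and vertical: "(0, 1) \<notin> direction_space F"
    unfolding strongly_bf_def by blast
  obtain r where r: "(w, r) \<in> F"
    using F(2) by force
  have "p = (w, r)" if "p \<in> F" for p
  proof -
    obtain w' s where p: "p = (w', s)"
      by force
    then have "w' = w"
      using that F(2) by force
    moreover have "s = r"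
      using vertical_direction[of w r F s] r that vertical p \<open>w' = w\<close> by blast
    ultimately show ?thesis
      using p by simp
  qed
  then have "F = {(w, r)}"
    using r by blast
  then have "(w, r) extreme_point_of epi h"
    using F(1) face_of_singleton by metis
  then show "nonneg w \<and> (\<exists>r. h w = ereal r \<and> (w, r) extreme_point_of epi h)"
    using w extreme_point_of_epi_eq by blast
next
  assume "nonneg w \<and> (\<exists>r. h w = ereal r \<and> (w, r) extreme_point_of epi h)"
  then obtain r where "nonneg w" "{(w, r)} face_of epi h"
    using face_of_singleton by blast
  then show "strongly_bf h w"
    unfolding strongly_bf_def direction_space_def by (intro conjI exI[of _ "{(w, r)}"]) auto
qed

section \<open>Conjugate functions\<close>

lemma sum_mult_eq_inner: "(\<Sum>i\<in>UNIV. t $ i * w $ i) = t \<bullet> w"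
  by (simp add: inner_vec_def)

lemma conj_fun_inner: "conj_fun h w = (SUP t. h t - ereal (t \<bullet> w))"
  by (simp add: conj_fun_def sum_mult_eq_inner)

lemma conj_fun_ge: "h t - ereal (t \<bullet> w) \<le> conj_fun h w"
  unfolding conj_fun_inner by (rule SUP_upper) simp

lemma conj_fun_not_MInf: "h 0 \<noteq> -\<infinity> \<Longrightarrow> conj_fun h w \<noteq> -\<infinity>"
  using conj_fun_ge[of h 0 w] by auto

lemma inner_nonneg_if_conj_fun_finite:
  assumes h: "\<And>s. 0 \<le> s \<Longrightarrow> 0 \<le> h (s *\<^sub>R d)" and finite: "conj_fun h w \<noteq> \<infinity>"
  shows "0 \<le> d \<bullet> w"
proof (rule ccontr)
  assume neg: "\<not> 0 \<le> d \<bullet> w"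
  have "ereal B \<le> conj_fun h w" for B
  proof -
    define s where "s = \<bar>B\<bar> / - (d \<bullet> w)"
    have s: "0 \<le> s"
      using neg by (simp add: s_def divide_le_0_iff)
    have "B \<le> s * - (d \<bullet> w)"
      using neg by (simp add: s_def)
    also have "ereal (s * - (d \<bullet> w)) \<le> h (s *\<^sub>R d) - ereal ((s *\<^sub>R d) \<bullet> w)"
      using h[OF s] by (cases "h (s *\<^sub>R d)") auto
    also have "\<dots> \<le> conj_fun h w"
      by (rule conj_fun_ge)
    finally show ?thesis
      by simp
  qed
  then show False
    using finite ereal_top by blast
qed

lemma nonneg_if_conj_fun_finite:
  assumes "\<And>t. nonneg t \<Longrightarrow> 0 \<le> h t" "conj_fun h w \<noteq> \<infinity>"
  shows "nonneg w"
  unfolding nonneg_def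
proof
  fix i
  have "0 \<le> axis i 1 \<bullet> w"
    using assms by (intro inner_nonneg_if_conj_fun_finite) (auto simp: nonneg_def axis_def)
  then show "0 \<le> w $ i"
    by (simp add: inner_axis')
qed

lemma convex_epi_conj_fun: "convex (epi (conj_fun h))"
  unfolding convex_def epi_def
proof (clarsimp)
  fix x y :: "real^'a" and a b u v :: real
  assume x: "conj_fun h x \<le> ereal a" and y: "conj_fun h y \<le> ereal b"
    and uv: "0 \<le> u" "0 \<le> v" "u + v = 1"
  show "conj_fun h (u *\<^sub>R x + v *\<^sub>R y) \<le> ereal (u * a + v * b)"
    unfolding conj_fun_inner
  proof (rule SUP_least)
    fix t
    have hx: "h t - ereal (t \<bullet> x) \<le> ereal a"
      using conj_fun_ge x by (rule order.trans)
    have hy: "h t - ereal (t \<bullet> y) \<le> ereal b"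
      using conj_fun_ge y by (rule order.trans)
    show "h t - ereal (t \<bullet> (u *\<^sub>R x + v *\<^sub>R y)) \<le> ereal (u * a + v * b)"
    proof (cases "h t")
      case (real q)
      have "u * (q - t \<bullet> x) + v * (q - t \<bullet> y) \<le> u * a + v * b"
        using hx hy uv real by (intro add_mono mult_left_mono) auto
      moreover have "u * (q - t \<bullet> x) + v * (q - t \<bullet> y) = (u + v) * q - t \<bullet> (u *\<^sub>R x + v *\<^sub>R y)"
        by (simp add: algebra_simps)
      ultimately show ?thesis
        using real uv by simp
    qed (use hx in auto)
  qed
qed

lemma conj_fun_sum_le:
  "conj_fun (\<lambda>t. \<Sum>k\<in>K. h k t) (\<Sum>k\<in>K. W k) \<le> (\<Sum>k\<in>K. conj_fun (h k) (W k))"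
  unfolding conj_fun_inner[of "\<lambda>t. \<Sum>k\<in>K. h k t"]
proof (rule SUP_least)
  fix t
  have "(\<Sum>k\<in>K. h k t) - ereal (t \<bullet> (\<Sum>k\<in>K. W k)) = (\<Sum>k\<in>K. h k t - ereal (t \<bullet> W k))"
    by (simp add: minus_ereal_def inner_sum_right sum.distrib sum_negf)
  also have "\<dots> \<le> (\<Sum>k\<in>K. conj_fun (h k) (W k))"
    by (intro sum_mono conj_fun_ge)
  finally show "(\<Sum>k\<in>K. h k t) - ereal (t \<bullet> (\<Sum>k\<in>K. W k)) \<le> (\<Sum>k\<in>K. conj_fun (h k) (W k))" .
qed

section \<open>Infimal decompositions\<close>

lemma sum_le_sum_imp_eq:
  fixes f g :: "'i \<Rightarrow> 'a::ordered_cancel_comm_monoid_add"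
  assumes "finite K" "\<And>k. k \<in> K \<Longrightarrow> f k \<le> g k" "sum g K \<le> sum f K" "k \<in> K"
  shows "f k = g k"
proof (rule ccontr)
  assume "f k \<noteq> g k"
  then have "sum f K < sum g K"
    using assms by (intro sum_strict_mono_ex1) (auto simp: order.strict_iff_order)
  then show False
    using assms(3) by simp
qed

lemma midpoint_exchange:
  fixes x a b :: "'a::real_vector"
  shows "(1 - 1/2) *\<^sub>R (x - a + b) + (1/2::real) *\<^sub>R (x - b + a) = x"
  by (simp add: scaleR_add_right scaleR_diff_right) (simp flip: scaleR_add_left)

lemma decomposition_nonneg: "decomposition K v W \<Longrightarrow> k \<in> K \<Longrightarrow> nonneg (W k)"
  by (simp add: decomposition_def)

lemma nonneg_if_decomposition: "decomposition K v W \<Longrightarrow> nonneg v"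
  unfolding decomposition_def nonneg_def by (auto intro!: sum_nonneg)

lemma decomposition_update:
  assumes W: "decomposition K v W" and K: "finite K" "k \<in> K" and y: "nonneg y"
  shows "decomposition K (v - W k + y) (W(k := y))"
proof -
  have "(\<Sum>j\<in>K. (W(k := y)) j) = y + (\<Sum>j\<in>K - {k}. W j)"
    using K by (simp add: sum.remove)
  also have "\<dots> = v - W k + y"
    using W K by (simp add: decomposition_def sum_diff1)
  finally show ?thesis
    using W K y by (simp add: decomposition_def)
qed

lemma decomposition_mix:
  assumes "decomposition K a A" "decomposition K b B" "0 \<le> u" "u \<le> 1"
  shows "decomposition K ((1 - u) *\<^sub>R a + u *\<^sub>R b) (\<lambda>k. (1 - u) *\<^sub>R A k + u *\<^sub>R B k)"
  using assms
  by (auto simp: decomposition_def nonneg_def sum.distrib simp flip: scaleR_sum_right)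

lemma decomposition_dominating:
  assumes K: "finite K" "k0 \<in> K" and y: "\<And>k. k \<in> K \<Longrightarrow> nonneg (y k)"
    and le: "\<forall>i. (\<Sum>k\<in>K. y k) $ i \<le> v $ i"
  shows "\<exists>W. decomposition K v W \<and> (\<forall>k\<in>K. \<forall>i. y k $ i \<le> W k $ i)"
proof -
  define W where "W k = (if k \<in> K then y k + (if k = k0 then v - (\<Sum>j\<in>K. y j) else 0) else 0)" for k
  have "(\<Sum>k\<in>K. W k) = (\<Sum>k\<in>K. y k + (if k = k0 then v - (\<Sum>j\<in>K. y j) else 0))"
    by (simp add: W_def)
  also have "\<dots> = v"
    using K by (simp add: sum.distrib)
  finally have "decomposition K v W"
    using y le K unfolding decomposition_def nonneg_def W_def by auto
  moreover have "\<forall>k\<in>K. \<forall>i. y k $ i \<le> W k $ i"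
    using le by (simp add: W_def)
  ultimately show ?thesis
    by blast
qed

text \<open>\<open>G_le_sum\<close> and \<open>G_attained\<close> say that \<open>G\<close> is the infimal convolution of the \<open>Gk\<close>
  over decompositions, with the infimum attained wherever it is finite.\<close>

locale infimal_decomposition =
  fixes K :: "'k set" and G :: "real^'t \<Rightarrow> ereal" and Gk :: "'k \<Rightarrow> real^'t \<Rightarrow> ereal"
  assumes finite_K: "finite K"
    and G_le_sum: "decomposition K v W \<Longrightarrow> G v \<le> (\<Sum>k\<in>K. Gk k (W k))"
    and G_attained: "G v \<noteq> \<infinity> \<Longrightarrow> \<exists>W. decomposition K v W \<and> (\<Sum>k\<in>K. Gk k (W k)) \<le> G v"
    and Gk_finite_iff: "k \<in> K \<Longrightarrow> Gk k v \<noteq> \<infinity> \<longleftrightarrow> nonneg v"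
    and Gk_not_MInf: "k \<in> K \<Longrightarrow> Gk k v \<noteq> -\<infinity>"
    and convex_epi_Gk: "k \<in> K \<Longrightarrow> convex (epi (Gk k))"
begin

definition bilevel_feasible :: "real^'t \<Rightarrow> ('k \<Rightarrow> real^'t) \<Rightarrow> bool" where
  "bilevel_feasible v W \<longleftrightarrow> decomposition K v W \<and> G v = (\<Sum>k\<in>K. Gk k (W k))"

text \<open>The finite value of \<open>Gk k\<close> on the nonnegative orthant; elsewhere \<open>real_of_ereal\<close>
  returns a junk value.\<close>

definition val :: "'k \<Rightarrow> real^'t \<Rightarrow> real" where
  "val k v = real_of_ereal (Gk k v)"

lemma Gk_eq_val: "k \<in> K \<Longrightarrow> nonneg v \<Longrightarrow> Gk k v = ereal (val k v)"
  unfolding val_def using Gk_finite_iff Gk_not_MInf by (intro ereal_real'[symmetric]) auto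

lemma in_epi_Gk: "k \<in> K \<Longrightarrow> nonneg v \<Longrightarrow> (v, val k v) \<in> epi (Gk k)"
  by (simp add: epi_def Gk_eq_val)

lemma nonneg_if_in_epi_Gk: "k \<in> K \<Longrightarrow> (v, s) \<in> epi (Gk k) \<Longrightarrow> nonneg v"
  using Gk_finite_iff by (force simp: epi_def)

lemma sum_Gk_eq_val:
  "decomposition K v W \<Longrightarrow> (\<Sum>k\<in>K. Gk k (W k)) = ereal (\<Sum>k\<in>K. val k (W k))"
  by (simp add: Gk_eq_val decomposition_nonneg)

lemma bilevel_feasible_nonneg: "bilevel_feasible v W \<Longrightarrow> k \<in> K \<Longrightarrow> nonneg (W k)"
  by (simp add: bilevel_feasible_def decomposition_def)

lemma bilevel_feasible_value:
  "bilevel_feasible v W \<Longrightarrow> G v = ereal (\<Sum>k\<in>K. val k (W k))"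
  unfolding bilevel_feasible_def using sum_Gk_eq_val by auto

lemma bilevel_feasible_exists: "G v \<noteq> \<infinity> \<Longrightarrow> \<exists>W. bilevel_feasible v W"
  using G_attained G_le_sum unfolding bilevel_feasible_def by (blast intro: order.antisym)

lemma translated_epi_Gk_subset:
  assumes W: "decomposition K v W" and k: "k \<in> K"
  shows "(\<lambda>p. (v - W k, (\<Sum>j\<in>K. val j (W j)) - val k (W k)) + p) ` epi (Gk k) \<subseteq> epi G"
proof (rule image_subsetI)
  fix p
  assume "p \<in> epi (Gk k)"
  moreover obtain y s where p: "p = (y, s)"
    by force
  ultimately have ys: "(y, s) \<in> epi (Gk k)"
    by simp
  then have y: "nonneg y"
    using nonneg_if_in_epi_Gk k by blast
  have "G (v - W k + y) \<le> (\<Sum>j\<in>K. Gk j ((W(k := y)) j))"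
    using W finite_K k y by (intro G_le_sum decomposition_update)
  also have "\<dots> = Gk k y + (\<Sum>j\<in>K - {k}. Gk j (W j))"
    using finite_K k by (simp add: sum.remove)
  also have "\<dots> \<le> ereal s + ereal (\<Sum>j\<in>K - {k}. val j (W j))"
    using ys W k by (intro add_mono) (auto simp: epi_def Gk_eq_val decomposition_nonneg)
  also have "\<dots> = ereal ((\<Sum>j\<in>K. val j (W j)) - val k (W k) + s)"
    using finite_K k by (simp add: sum_diff1)
  finally show "(v - W k, (\<Sum>j\<in>K. val j (W j)) - val k (W k)) + p \<in> epi G"
    by (simp add: p epi_def algebra_simps)
qed

lemma bilevel_feasible_unique_if_extreme:
  assumes ext: "(w, r) extreme_point_of epi G"
    and W: "bilevel_feasible w W" and W': "bilevel_feasible w W'"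
  shows "W' = W"
proof (rule ccontr)
  assume "W' \<noteq> W"
  then obtain k where k: "k \<in> K" and ne: "W' k \<noteq> W k"
    using W W' unfolding bilevel_feasible_def decomposition_def by fastforce
  have D: "decomposition K w W" "decomposition K w W'"
    using W W' by (simp_all add: bilevel_feasible_def)
  have r: "r = (\<Sum>j\<in>K. val j (W j))" "r = (\<Sum>j\<in>K. val j (W' j))"
    using extreme_point_of_epi_eq[OF ext] bilevel_feasible_value[OF W] bilevel_feasible_value[OF W']
    by simp_all
  \<comment> \<open>Exchange the \<open>k\<close>-th components of the two decompositions.\<close>
  define p where "p = (w - W k, r - val k (W k)) + (W' k, val k (W' k))"
  define q where "q = (w - W' k, r - val k (W' k)) + (W k, val k (W k))"
  have "p \<in> epi G"
    using translated_epi_Gk_subset[OF D(1) k] in_epi_Gk[OF k decomposition_nonneg[OF D(2) k]]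
    unfolding p_def r(1) by blast
  moreover have "q \<in> epi G"
    using translated_epi_Gk_subset[OF D(2) k] in_epi_Gk[OF k decomposition_nonneg[OF D(1) k]]
    unfolding q_def r(2) by blast
  moreover have "(w, r) = (1 - 1/2) *\<^sub>R p + (1/2) *\<^sub>R q"
    using midpoint_exchange[of w "W k" "W' k"] midpoint_exchange[of r "val k (W k)" "val k (W' k)"]
    by (simp add: p_def q_def prod_eq_iff)
  ultimately have "p = q"
    using extreme_point_of_combinationD[OF ext, of p q "1/2"] by simp
  then have "2 *\<^sub>R W' k = 2 *\<^sub>R W k"
    by (simp add: p_def q_def algebra_simps scaleR_2)
  then show False
    using ne by simp
qed

lemma component_extreme_if_extreme:
  assumes ext: "(w, r) extreme_point_of epi G" and W: "bilevel_feasible w W" and k: "k \<in> K"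
  shows "(W k, val k (W k)) extreme_point_of epi (Gk k)"
proof (rule extreme_point_of_translation_subset)
  have D: "decomposition K w W"
    using W by (simp add: bilevel_feasible_def)
  have r: "r = (\<Sum>j\<in>K. val j (W j))"
    using extreme_point_of_epi_eq[OF ext] bilevel_feasible_value[OF W] by simp
  show "(\<lambda>p. (w - W k, r - val k (W k)) + p) ` epi (Gk k) \<subseteq> epi G"
    unfolding r by (rule translated_epi_Gk_subset[OF D k])
  show "(W k, val k (W k)) \<in> epi (Gk k)"
    by (rule in_epi_Gk[OF k decomposition_nonneg[OF D k]])
  show "(w - W k, r - val k (W k)) + (W k, val k (W k)) extreme_point_of epi G"
    using ext by simp
qed

lemma mixture_of_bilevel_feasible:
  assumes a: "a \<in> epi G" and b: "b \<in> epi G" and u: "0 < u" "u < 1"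
    and w: "(w, r) = (1 - u) *\<^sub>R a + u *\<^sub>R b" and r: "G w = ereal r"
    and A: "bilevel_feasible (fst a) A" and B: "bilevel_feasible (fst b) B"
  defines "Z \<equiv> \<lambda>k. (1 - u) *\<^sub>R A k + u *\<^sub>R B k"
  shows "bilevel_feasible w Z"
    and "k \<in> K \<Longrightarrow> val k (Z k) = (1 - u) * val k (A k) + u * val k (B k)"
    and "G (fst a) = ereal (snd a)" and "G (fst b) = ereal (snd b)"
proof -
  have DA: "decomposition K (fst a) A" and DB: "decomposition K (fst b) B"
    using A B by (simp_all add: bilevel_feasible_def)
  have DZ: "decomposition K w Z"
    using decomposition_mix[OF DA DB] u w unfolding Z_def by (simp add: prod_eq_iff)
  define \<alpha> where "\<alpha> = (\<Sum>k\<in>K. val k (A k))"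
  define \<beta> where "\<beta> = (\<Sum>k\<in>K. val k (B k))"
  have "G (fst a) = ereal \<alpha>" "G (fst b) = ereal \<beta>"
    using bilevel_feasible_value A B by (simp_all add: \<alpha>_def \<beta>_def)
  then have \<alpha>: "\<alpha> \<le> snd a" and \<beta>: "\<beta> \<le> snd b"
    using a b by (auto simp: epi_def)
  have Z_le: "val k (Z k) \<le> (1 - u) * val k (A k) + u * val k (B k)" if k: "k \<in> K" for k
  proof -
    have "(1 - u) *\<^sub>R (A k, val k (A k)) + u *\<^sub>R (B k, val k (B k)) \<in> epi (Gk k)"
      using convex_epi_Gk[OF k] in_epi_Gk[OF k] DA DB k u
      by (intro convexD) (auto simp: decomposition_nonneg)
    then show ?thesis
      using Gk_eq_val[OF k decomposition_nonneg[OF DZ k]] by (simp add: Z_def epi_def)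
  qed
  \<comment> \<open>The chain \<open>r \<le> \<Sum> val Z \<le> (1 - u) \<alpha> + u \<beta> \<le> (1 - u) snd a + u snd b = r\<close> is tight.\<close>
  have r_le: "r \<le> (\<Sum>k\<in>K. val k (Z k))"
    using G_le_sum[OF DZ] r sum_Gk_eq_val[OF DZ] by simp
  have Z_sum_le: "(\<Sum>k\<in>K. val k (Z k)) \<le> (\<Sum>k\<in>K. (1 - u) * val k (A k) + u * val k (B k))"
    using Z_le by (rule sum_mono)
  have mix_sum: "(\<Sum>k\<in>K. (1 - u) * val k (A k) + u * val k (B k)) = (1 - u) * \<alpha> + u * \<beta>"
    by (simp add: \<alpha>_def \<beta>_def sum.distrib sum_distrib_left)
  have gap: "(1 - u) * (snd a - \<alpha>) + u * (snd b - \<beta>) = r - ((1 - u) * \<alpha> + u * \<beta>)"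
    using w by (simp add: prod_eq_iff algebra_simps)
  have "0 \<le> (1 - u) * (snd a - \<alpha>)" "0 \<le> u * (snd b - \<beta>)"
    using u \<alpha> \<beta> by simp_all
  then have tight: "r = (\<Sum>k\<in>K. val k (Z k))"
    "(\<Sum>k\<in>K. val k (Z k)) = (\<Sum>k\<in>K. (1 - u) * val k (A k) + u * val k (B k))"
    "(1 - u) * (snd a - \<alpha>) = 0" "u * (snd b - \<beta>) = 0"
    using r_le Z_sum_le mix_sum gap by linarith+
  show "bilevel_feasible w Z"
    using DZ r tight(1) sum_Gk_eq_val[OF DZ] by (simp add: bilevel_feasible_def)
  show "k \<in> K \<Longrightarrow> val k (Z k) = (1 - u) * val k (A k) + u * val k (B k)"
    by (rule sum_le_sum_imp_eq[OF finite_K Z_le]) (use tight(2) in simp_all)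
  show "G (fst a) = ereal (snd a)" "G (fst b) = ereal (snd b)"
    using tight(3,4) u \<open>G (fst a) = ereal \<alpha>\<close> \<open>G (fst b) = ereal \<beta>\<close> by simp_all
qed

lemma extreme_if_unique_bilevel_feasible:
  assumes W: "bilevel_feasible w W" and unique: "\<And>W'. bilevel_feasible w W' \<Longrightarrow> W' = W"
    and ext: "\<And>k. k \<in> K \<Longrightarrow> (W k, val k (W k)) extreme_point_of epi (Gk k)"
  shows "(w, \<Sum>k\<in>K. val k (W k)) extreme_point_of epi G"
proof -
  define r where "r = (\<Sum>k\<in>K. val k (W k))"
  have r: "G w = ereal r"
    using bilevel_feasible_value[OF W] by (simp add: r_def)
  have "a = b" if a: "a \<in> epi G" and b: "b \<in> epi G" and u: "0 < u" "u < 1"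
    and w: "(w, r) = (1 - u) *\<^sub>R a + u *\<^sub>R b" for a b u
  proof -
    obtain A B where A: "bilevel_feasible (fst a) A" and B: "bilevel_feasible (fst b) B"
      using a b bilevel_feasible_exists by (force simp: epi_def)
    note mix = mixture_of_bilevel_feasible[OF a b u w r A B]
    have DA: "decomposition K (fst a) A" and DB: "decomposition K (fst b) B"
      using A B by (simp_all add: bilevel_feasible_def)
    have "A k = B k" if k: "k \<in> K" for k
    proof -
      have "(W k, val k (W k)) = (1 - u) *\<^sub>R (A k, val k (A k)) + u *\<^sub>R (B k, val k (B k))"
        using unique[OF mix(1)] mix(2)[OF k] by (simp add: fun_eq_iff)
      then have "(A k, val k (A k)) = (B k, val k (B k))"
        using extreme_point_of_combinationD[OF ext[OF k] in_epi_Gk[OF k] in_epi_Gk[OF k] u]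
          decomposition_nonneg[OF DA k] decomposition_nonneg[OF DB k] by blast
      then show ?thesis
        by simp
    qed
    then have "fst a = fst b"
      using DA DB by (simp add: decomposition_def)
    moreover then have "snd a = snd b"
      using mix(3,4) by simp
    ultimately show "a = b"
      by (simp add: prod_eq_iff)
  qed
  moreover have "(w, r) \<in> epi G"
    using r by (simp add: epi_def)
  ultimately show ?thesis
    unfolding r_def[symmetric] extreme_point_of_def in_segment by blast
qed

theorem strongly_bf_iff_unique_bilevel_feasible:
  "strongly_bf G w \<longleftrightarrow>
     (\<exists>W. bilevel_feasible w W \<and> (\<forall>W'. bilevel_feasible w W' \<longrightarrow> W' = W)
        \<and> (\<forall>k\<in>K. strongly_bf (Gk k) (W k)))"
proof
  assume "strongly_bf G w"
  then obtain r where r: "G w = ereal r" and ext: "(w, r) extreme_point_of epi G"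
    unfolding strongly_bf_iff_extreme_point by blast
  then obtain W where W: "bilevel_feasible w W"
    using bilevel_feasible_exists[of w] by auto
  show "\<exists>W. bilevel_feasible w W \<and> (\<forall>W'. bilevel_feasible w W' \<longrightarrow> W' = W)
      \<and> (\<forall>k\<in>K. strongly_bf (Gk k) (W k))"
  proof (intro exI[of _ W] conjI allI impI ballI)
    show "bilevel_feasible w W"
      by (rule W)
    show "W' = W" if "bilevel_feasible w W'" for W'
      by (rule bilevel_feasible_unique_if_extreme[OF ext W that])
    show "strongly_bf (Gk k) (W k)" if k: "k \<in> K" for k
      unfolding strongly_bf_iff_extreme_point
    proof (intro conjI exI[of _ "val k (W k)"])
      show "nonneg (W k)"
        by (rule bilevel_feasible_nonneg[OF W k])
      then show "Gk k (W k) = ereal (val k (W k))"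
        by (rule Gk_eq_val[OF k])
      show "(W k, val k (W k)) extreme_point_of epi (Gk k)"
        by (rule component_extreme_if_extreme[OF ext W k])
    qed
  qed
next
  assume "\<exists>W. bilevel_feasible w W \<and> (\<forall>W'. bilevel_feasible w W' \<longrightarrow> W' = W)
      \<and> (\<forall>k\<in>K. strongly_bf (Gk k) (W k))"
  then obtain W where W: "bilevel_feasible w W" and unique: "\<And>W'. bilevel_feasible w W' \<Longrightarrow> W' = W"
    and sbf: "\<And>k. k \<in> K \<Longrightarrow> strongly_bf (Gk k) (W k)"
    by blast
  have ext: "(W k, val k (W k)) extreme_point_of epi (Gk k)" if k: "k \<in> K" for k
  proof -
    obtain s where "Gk k (W k) = ereal s" "(W k, s) extreme_point_of epi (Gk k)"
      using sbf[OF k] unfolding strongly_bf_iff_extreme_point by blast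
    then show ?thesis
      by (simp add: val_def)
  qed
  have "(w, \<Sum>k\<in>K. val k (W k)) extreme_point_of epi G"
    using extreme_if_unique_bilevel_feasible[OF W unique ext] .
  moreover have "nonneg w"
    using W nonneg_if_decomposition unfolding bilevel_feasible_def by blast
  ultimately show "strongly_bf G w"
    using bilevel_feasible_value[OF W] unfolding strongly_bf_iff_extreme_point by blast
qed

end

section \<open>Nonnegative orthants\<close>

lemma inner_nonneg_if_nonneg: "nonneg t \<Longrightarrow> nonneg z \<Longrightarrow> 0 \<le> t \<bullet> z"
  by (simp add: nonneg_def inner_vec_def sum_nonneg)

lemma nonneg_Basis_prod:
  fixes x :: "'a::euclidean_space" and y :: "'b::euclidean_space"
  shows "(\<forall>b\<in>Basis. 0 \<le> (x, y) \<bullet> b) \<longleftrightarrow> (\<forall>b\<in>Basis. 0 \<le> x \<bullet> b) \<and> (\<forall>b\<in>Basis. 0 \<le> y \<bullet> b)"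
  unfolding Basis_prod_def ball_Un ball_simps by simp

lemma nonneg_Basis_vec:
  fixes x :: "'a::euclidean_space^'n"
  shows "(\<forall>b\<in>Basis. 0 \<le> x \<bullet> b) \<longleftrightarrow> (\<forall>i. \<forall>b\<in>Basis. 0 \<le> x $ i \<bullet> b)"
  unfolding Basis_vec_def by (auto simp: inner_axis)

lemma nonneg_orthant_iff:
  fixes y :: "(real^'a)^'b" and s :: "real^'c" and \<rho> :: real
  shows "(\<forall>b\<in>Basis. 0 \<le> (y, s, \<rho>) \<bullet> b) \<longleftrightarrow> (\<forall>i j. 0 \<le> y $ i $ j) \<and> (\<forall>i. 0 \<le> s $ i) \<and> 0 \<le> \<rho>"
  unfolding nonneg_Basis_prod nonneg_Basis_vec by simp

lemma convex_cone_hull_Basis: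
  "convex_cone hull Basis = {x::'a::euclidean_space. \<forall>b\<in>Basis. 0 \<le> x \<bullet> b}"
proof
  show "convex_cone hull Basis \<subseteq> {x::'a. \<forall>b\<in>Basis. 0 \<le> x \<bullet> b}"
    by (rule hull_minimal) (auto simp: convex_cone_iff inner_Basis inner_add_left)
  show "{x::'a. \<forall>b\<in>Basis. 0 \<le> x \<bullet> b} \<subseteq> convex_cone hull Basis"
  proof
    fix x :: 'a
    assume x: "x \<in> {x. \<forall>b\<in>Basis. 0 \<le> x \<bullet> b}"
    have "(\<Sum>b\<in>B. (x \<bullet> b) *\<^sub>R b) \<in> convex_cone hull Basis" if "finite B" "B \<subseteq> Basis" for B
      using that
    proof (induction B rule: finite_induct)
      case empty
      then show ?case
        by (simp add: convex_cone_hull_contains_0)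
    next
      case (insert b B)
      then have "(x \<bullet> b) *\<^sub>R b \<in> convex_cone hull Basis"
        using x by (simp add: convex_cone_hull_mul hull_inc)
      then show ?case
        using insert by (simp add: convex_cone_hull_add)
    qed
    then show "x \<in> convex_cone hull Basis"
      using euclidean_representation[of x] by (metis finite_Basis order_refl)
  qed
qed

lemma closed_linear_image_orthant:
  fixes L :: "'a::euclidean_space \<Rightarrow> 'b::euclidean_space"
  assumes "linear L"
  shows "closed (L ` {x. \<forall>b\<in>Basis. 0 \<le> x \<bullet> b})"
  unfolding convex_cone_hull_Basis[symmetric] convex_cone_hull_linear_image[OF assms, symmetric]
  by (simp add: closed_convex_cone_hull)

lemma nonneg_if_bounded_below_on_ray:
  fixes a b c :: real
  assumes "\<And>s. 0 \<le> s \<Longrightarrow> b < a + c * s"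
  shows "0 \<le> c"
proof (rule ccontr)
  assume c: "\<not> 0 \<le> c"
  then have "b < a + c * ((\<bar>a\<bar> + \<bar>b\<bar>) / - c)"
    by (intro assms) (simp add: divide_nonneg_neg)
  also have "\<dots> = a - \<bar>a\<bar> - \<bar>b\<bar>"
    using c by (simp add: field_simps)
  finally show False
    by linarith
qed

section \<open>Flows and the follower problem\<close>

definition cost :: "('a \<Rightarrow> real) \<Rightarrow> ('a::finite \<Rightarrow> real) \<Rightarrow> real" where
  "cost c x = (\<Sum>a\<in>UNIV. c a * x a)"

definition toll :: "('t::finite + 'u \<Rightarrow> real) \<Rightarrow> real^'t" where
  "toll x = (\<chi> i. x (Inl i))"

definition netflow :: "('a \<Rightarrow> 'v) \<Rightarrow> ('a \<Rightarrow> 'v) \<Rightarrow> ('a \<Rightarrow> real) \<Rightarrow> 'v \<Rightarrow> real" where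
  "netflow tail head x v = (\<Sum>a\<in>{a. tail a = v}. x a) - (\<Sum>a\<in>{a. head a = v}. x a)"

lemma flow_set_iff:
  "x \<in> flow_set tail head b \<longleftrightarrow> (\<forall>v. netflow tail head x v = b v) \<and> (\<forall>a. 0 \<le> x a)"
  by (simp add: flow_set_def netflow_def)

lemma netflow_add_arc:
  fixes tail head :: "'a::finite \<Rightarrow> 'v"
  shows "netflow tail head (\<lambda>b. x b + (if b = a then 1 else 0)) v
    = netflow tail head x v + (if tail a = v then 1 else 0) - (if head a = v then 1 else 0)"
  by (simp add: netflow_def sum.distrib)

lemma flow_of_path:
  fixes tail head :: "('t::finite + 'u::finite) \<Rightarrow> 'v"
  assumes "is_path tail head p o' d"
  shows "(\<lambda>a. real (count_list p a)) \<in> flow_set tail head (supply_vec o' d)"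
  using assms
proof (induction p arbitrary: o')
  case Nil
  then show ?case
    by (simp add: flow_set_iff netflow_def supply_vec_def)
next
  case (Cons a p)
  then have "tail a = o'" and "(\<lambda>b. real (count_list p b)) \<in> flow_set tail head (supply_vec (head a) d)"
    by auto
  moreover have "(\<lambda>b. real (count_list (a # p) b)) = (\<lambda>b. real (count_list p b) + (if b = a then 1 else 0))"
    by auto
  ultimately show ?case
    by (auto simp: flow_set_iff netflow_add_arc supply_vec_def)
qed

lemma toll_nonneg: "x \<in> flow_set tail head b \<Longrightarrow> nonneg (toll x)"
  by (simp add: flow_set_def toll_def nonneg_def)

lemma cost_nonneg: "\<forall>a. 0 \<le> c a \<Longrightarrow> x \<in> flow_set tail head b \<Longrightarrow> 0 \<le> cost c x"
  by (simp add: flow_set_def cost_def sum_nonneg)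

lemma toll_sum: "toll (\<lambda>a. \<Sum>k\<in>S. x k a) = (\<Sum>k\<in>S. toll (x k))"
  by (simp add: toll_def vec_eq_iff sum_component)

lemma cost_sum: "cost c (\<lambda>a. \<Sum>k\<in>S. x k a) = (\<Sum>k\<in>S. cost c (x k))"
  by (simp add: cost_def sum_distrib_left sum.swap[of _ S])

lemma netflow_sum:
  fixes tail head :: "'a::finite \<Rightarrow> 'v"
  shows "netflow tail head (\<lambda>a. \<Sum>k\<in>S. x k a) v = (\<Sum>k\<in>S. netflow tail head (x k) v)"
  by (simp add: netflow_def sum_subtractf sum.swap[of _ S])

lemma netflow_divide:
  fixes tail head :: "'a::finite \<Rightarrow> 'v"
  shows "netflow tail head (\<lambda>a. x a / m) v = netflow tail head x v / m"
  by (simp add: netflow_def sum_divide_distrib diff_divide_distrib)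

lemma fk_eq_INF:
  "nonneg t \<Longrightarrow> fk tail head c o' d t
     = (INF x\<in>flow_set tail head (supply_vec o' d). ereal (cost c x + t \<bullet> toll x))"
  by (simp add: fk_def cost_def toll_def inner_vec_def Setcompr_eq_image)

lemma fk_outside: "\<not> nonneg t \<Longrightarrow> fk tail head c o' d t = -\<infinity>"
  by (simp add: fk_def)

lemma fk_le:
  assumes "nonneg t" "x \<in> flow_set tail head (supply_vec o' d)"
  shows "fk tail head c o' d t \<le> ereal (cost c x + t \<bullet> toll x)"
  unfolding fk_eq_INF[OF assms(1)] using assms(2) by (rule INF_lower)

lemma fk_nonneg:
  assumes "\<forall>a. 0 \<le> c a" "nonneg t"
  shows "0 \<le> fk tail head c o' d t"
  unfolding fk_eq_INF[OF assms(2)] zero_ereal_def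
  using assms by (intro INF_greatest) (simp add: cost_nonneg toll_nonneg inner_nonneg_if_nonneg)

lemma conj_fk_le_cost:
  assumes x: "x \<in> flow_set tail head (supply_vec o' d)" and v: "\<forall>i. toll x $ i \<le> v $ i"
  shows "conj_fun (fk tail head c o' d) v \<le> ereal (cost c x)"
  unfolding conj_fun_inner
proof (rule SUP_least)
  fix t
  show "fk tail head c o' d t - ereal (t \<bullet> v) \<le> ereal (cost c x)"
  proof (cases "nonneg t")
    case True
    have "t \<bullet> toll x \<le> t \<bullet> v"
      using True v unfolding inner_vec_def nonneg_def by (auto intro!: sum_mono mult_left_mono)
    then show ?thesis
      using fk_le[OF True x, of c] by (cases "fk tail head c o' d t") auto
  qed (simp add: fk_outside)
qed

section \<open>Strong duality\<close>

locale toll_network =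
  fixes tail head :: "('t::finite + 'u::finite) \<Rightarrow> 'v::finite"
    and c :: "('t + 'u) \<Rightarrow> real" and K :: "'k set" and orig dest :: "'k \<Rightarrow> 'v"
  assumes c_nonneg: "\<forall>a. 0 \<le> c a" and finite_K: "finite K"
    and connected: "\<forall>k\<in>K. \<exists>p. is_path tail head p (orig k) (dest k) \<and> (\<forall>a\<in>set p. a \<notin> range Inl)"
begin

abbreviation flows :: "'k \<Rightarrow> ('t + 'u \<Rightarrow> real) set" where
  "flows k \<equiv> flow_set tail head (supply_vec (orig k) (dest k))"

abbreviation f :: "'k \<Rightarrow> real^'t \<Rightarrow> ereal" where
  "f k \<equiv> fk tail head c (orig k) (dest k)"

lemma untolled_flow: "k \<in> K \<Longrightarrow> \<exists>x\<in>flows k. toll x = 0"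
proof -
  assume "k \<in> K"
  then obtain p where p: "is_path tail head p (orig k) (dest k)" "\<forall>a\<in>set p. a \<notin> range Inl"
    using connected by blast
  then have "toll (\<lambda>a. real (count_list p a)) = 0"
    by (auto simp: toll_def vec_eq_iff count_list_0_iff)
  then show ?thesis
    using flow_of_path[OF p(1)] by blast
qed

lemma f_nonneg: "nonneg t \<Longrightarrow> 0 \<le> f k t"
  by (rule fk_nonneg[OF c_nonneg])

lemma f_finite: "k \<in> K \<Longrightarrow> nonneg t \<Longrightarrow> f k t = ereal (real_of_ereal (f k t))"
proof -
  assume k: "k \<in> K" and t: "nonneg t"
  then obtain x where "x \<in> flows k"
    using untolled_flow by blast
  then show ?thesis
    using f_nonneg[OF t, of k] fk_le[OF t \<open>x \<in> flows k\<close>, of c] by (cases "f k t") auto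
qed

definition attainable :: "((real^'t) \<times> real) set" where
  "attainable = {(z, r). \<exists>x. (\<forall>k\<in>K. x k \<in> flows k)
     \<and> (\<forall>i. (\<Sum>k\<in>K. toll (x k)) $ i \<le> z $ i) \<and> (\<Sum>k\<in>K. cost c (x k)) \<le> r}"

definition commodities :: "'v \<times> 'v \<Rightarrow> 'k set" where
  "commodities od = {k\<in>K. (orig k, dest k) = od}"

text \<open>Merging commodities with a common origin-destination pair makes the attainable set a slice
  of the image of an orthant in a finite-dimensional space under a linear map, and hence closed.
  \<open>multiplicity od\<close> is \<open>0\<close> for unused pairs.\<close>

definition multiplicity :: "'v \<times> 'v \<Rightarrow> real" where
  "multiplicity od = real (card (commodities od))"

lemma sum_commodities: "(\<Sum>od\<in>UNIV. \<Sum>k\<in>commodities od. h k) = (\<Sum>k\<in>K. h k)"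
  unfolding commodities_def using sum.group[of K UNIV "\<lambda>k. (orig k, dest k)" h] finite_K by simp

lemma multiplicity_pos: "k \<in> K \<Longrightarrow> 0 < multiplicity (orig k, dest k)"
proof -
  assume "k \<in> K"
  then have "k \<in> commodities (orig k, dest k)"
    by (simp add: commodities_def)
  moreover have "finite (commodities (orig k, dest k))"
    using finite_K by (simp add: commodities_def)
  ultimately show ?thesis
    by (auto simp: multiplicity_def card_gt_0_iff)
qed

lemma sum_average_le:
  assumes "\<And>od. 0 \<le> h od"
  shows "(\<Sum>k\<in>K. h (orig k, dest k) / multiplicity (orig k, dest k)) \<le> (\<Sum>od\<in>UNIV. h od)"
proof -
  have "(\<Sum>k\<in>K. h (orig k, dest k) / multiplicity (orig k, dest k))
      = (\<Sum>od\<in>UNIV. \<Sum>k\<in>commodities od. h od / multiplicity od)"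
    unfolding sum_commodities[symmetric] by (intro sum.cong refl) (auto simp: commodities_def)
  also have "\<dots> = (\<Sum>od\<in>UNIV. multiplicity od * (h od / multiplicity od))"
    by (simp add: multiplicity_def)
  also have "\<dots> \<le> (\<Sum>od\<in>UNIV. h od)"
    using assms by (intro sum_mono) (cases "multiplicity od = 0"; simp)
  finally show ?thesis .
qed

definition aggregate ::
  "((real^('t + 'u))^('v \<times> 'v)) \<times> (real^'t) \<times> real
    \<Rightarrow> ((real^'t) \<times> real) \<times> (real^(('v \<times> 'v) \<times> 'v))" where
  "aggregate = (\<lambda>(y, s, \<rho>).
     ((s + (\<Sum>od\<in>UNIV. toll (($) (y $ od))), \<rho> + (\<Sum>od\<in>UNIV. cost c (($) (y $ od)))),
      \<chi> q. netflow tail head (($) (y $ fst q)) (snd q)))"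

definition total_supply :: "real^(('v \<times> 'v) \<times> 'v)" where
  "total_supply = (\<chi> q. multiplicity (fst q) * supply_vec (fst (fst q)) (snd (fst q)) (snd q))"

lemma linear_aggregate: "linear aggregate"
proof (rule linearI)
  fix p q and r :: real
  show "aggregate (p + q) = aggregate p + aggregate q"
    by (simp add: aggregate_def split_beta toll_def cost_def netflow_def vec_eq_iff sum.distrib distrib_left)
  show "aggregate (r *\<^sub>R p) = r *\<^sub>R aggregate p"
    by (simp add: aggregate_def split_beta toll_def cost_def netflow_def vec_eq_iff sum_distrib_left
        right_diff_distrib algebra_simps)
qed

lemma aggregate_attainable:
  assumes "(z, r) \<in> attainable"
  shows "\<exists>q. (\<forall>b\<in>Basis. 0 \<le> q \<bullet> b) \<and> aggregate q = ((z, r), total_supply)"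
proof -
  obtain x where x: "\<forall>k\<in>K. x k \<in> flows k" and z: "\<forall>i. (\<Sum>k\<in>K. toll (x k)) $ i \<le> z $ i"
    and r: "(\<Sum>k\<in>K. cost c (x k)) \<le> r"
    using assms unfolding attainable_def by blast
  define y :: "(real^('t + 'u))^('v \<times> 'v)" where "y = (\<chi> od a. \<Sum>k\<in>commodities od. x k a)"
  define s where "s = z - (\<Sum>k\<in>K. toll (x k))"
  define \<rho> where "\<rho> = r - (\<Sum>k\<in>K. cost c (x k))"
  have y_od: "($) (y $ od) = (\<lambda>a. \<Sum>k\<in>commodities od. x k a)" for od
    by (simp add: y_def fun_eq_iff)
  have "(\<Sum>od\<in>UNIV. toll (($) (y $ od))) = (\<Sum>k\<in>K. toll (x k))"
    by (simp add: y_od toll_sum sum_commodities)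
  moreover have "(\<Sum>od\<in>UNIV. cost c (($) (y $ od))) = (\<Sum>k\<in>K. cost c (x k))"
    by (simp add: y_od cost_sum sum_commodities)
  moreover have "netflow tail head (($) (y $ od)) v = multiplicity od * supply_vec (fst od) (snd od) v"
    for od v
  proof -
    have "netflow tail head (($) (y $ od)) v = (\<Sum>k\<in>commodities od. supply_vec (fst od) (snd od) v)"
      unfolding y_od netflow_sum using x by (intro sum.cong refl) (auto simp: commodities_def flow_set_iff)
    then show ?thesis
      by (simp add: multiplicity_def)
  qed
  moreover have "\<forall>b\<in>Basis. 0 \<le> (y, s, \<rho>) \<bullet> b"
    unfolding nonneg_orthant_iff using x z r
    by (auto simp: y_def s_def \<rho>_def flow_set_iff commodities_def intro!: sum_nonneg)
  ultimately show ?thesis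
    by (intro exI[of _ "(y, s, \<rho>)"]) (simp add: aggregate_def total_supply_def s_def \<rho>_def vec_eq_iff)
qed

lemma attainable_if_aggregate:
  assumes q: "\<forall>b\<in>Basis. 0 \<le> q \<bullet> b" and agg: "aggregate q = ((z, r), total_supply)"
  shows "(z, r) \<in> attainable"
proof -
  obtain y s \<rho> where q_eq: "q = (y, s, \<rho>)"
    by (cases q) auto
  have y: "\<forall>od a. 0 \<le> y $ od $ a" and s: "\<forall>i. 0 \<le> s $ i" and \<rho>: "0 \<le> \<rho>"
    using q unfolding q_eq nonneg_orthant_iff by auto
  have z: "z = s + (\<Sum>od\<in>UNIV. toll (($) (y $ od)))"
    and r: "r = \<rho> + (\<Sum>od\<in>UNIV. cost c (($) (y $ od)))"
    using agg unfolding q_eq aggregate_def by auto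
  have netflow_all: "\<forall>q. netflow tail head (($) (y $ fst q)) (snd q)
      = multiplicity (fst q) * supply_vec (fst (fst q)) (snd (fst q)) (snd q)"
    using agg unfolding q_eq aggregate_def total_supply_def by (simp add: vec_eq_iff)
  have netflow_y: "netflow tail head (($) (y $ od)) v = multiplicity od * supply_vec (fst od) (snd od) v"
    for od v
    using spec[OF netflow_all, of "(od, v)"] by simp
  define x where "x k = (\<lambda>a. y $ (orig k, dest k) $ a / multiplicity (orig k, dest k))" for k
  have "x k \<in> flows k" if k: "k \<in> K" for k
    using multiplicity_pos[OF k] netflow_y y by (simp add: flow_set_iff x_def netflow_divide)
  then have "\<forall>k\<in>K. x k \<in> flows k"
    by blast
  moreover have "(\<Sum>k\<in>K. toll (x k)) $ i \<le> z $ i" for i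
  proof -
    have "(\<Sum>k\<in>K. toll (x k)) $ i
        = (\<Sum>k\<in>K. y $ (orig k, dest k) $ Inl i / multiplicity (orig k, dest k))"
      by (simp add: x_def toll_def sum_component)
    also have "\<dots> \<le> (\<Sum>od\<in>UNIV. y $ od $ Inl i)"
      using y by (intro sum_average_le) auto
    also have "\<dots> \<le> z $ i"
      using s by (simp add: z toll_def sum_component)
    finally show ?thesis .
  qed
  moreover have "(\<Sum>k\<in>K. cost c (x k)) \<le> r"
  proof -
    have "(\<Sum>k\<in>K. cost c (x k))
        = (\<Sum>k\<in>K. cost c (($) (y $ (orig k, dest k))) / multiplicity (orig k, dest k))"
      by (simp add: x_def cost_def sum_divide_distrib)
    also have "\<dots> \<le> (\<Sum>od\<in>UNIV. cost c (($) (y $ od)))"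
      using c_nonneg by (intro sum_average_le) (simp add: cost_def sum_nonneg y[rule_format])
    also have "\<dots> \<le> r"
      using \<rho> by (simp add: r)
    finally show ?thesis .
  qed
  ultimately show ?thesis
    unfolding attainable_def by blast
qed

lemma attainable_eq_slice:
  "attainable = (\<lambda>p. (p, total_supply)) -` (aggregate ` {q. \<forall>b\<in>Basis. 0 \<le> q \<bullet> b})"
proof (intro set_eqI iffI)
  fix p :: "(real^'t) \<times> real"
  obtain z r where p: "p = (z, r)"
    by force
  show "p \<in> (\<lambda>p. (p, total_supply)) -` (aggregate ` {q. \<forall>b\<in>Basis. 0 \<le> q \<bullet> b})"
    if p_att: "p \<in> attainable"
  proof -
    obtain q where "\<forall>b\<in>Basis. 0 \<le> q \<bullet> b" "aggregate q = ((z, r), total_supply)"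
      using aggregate_attainable p_att unfolding p by blast
    then have "((z, r), total_supply) \<in> aggregate ` {q. \<forall>b\<in>Basis. 0 \<le> q \<bullet> b}"
      by (intro image_eqI[of _ aggregate q]) auto
    then show ?thesis
      unfolding p by simp
  qed
  show "p \<in> attainable"
    if p_slice: "p \<in> (\<lambda>p. (p, total_supply)) -` (aggregate ` {q. \<forall>b\<in>Basis. 0 \<le> q \<bullet> b})"
  proof -
    obtain q where "\<forall>b\<in>Basis. 0 \<le> q \<bullet> b" "aggregate q = ((z, r), total_supply)"
      using p_slice unfolding p vimage_eq image_iff by auto
    then show ?thesis
      unfolding p by (rule attainable_if_aggregate)
  qed
qed

lemma closed_attainable: "closed attainable"
  unfolding attainable_eq_slice
  by (intro continuous_closed_vimage closed_linear_image_orthant linear_aggregate continuous_intros)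

lemma convex_attainable: "convex attainable"
proof -
  let ?S = "aggregate ` {q. \<forall>b\<in>Basis. 0 \<le> q \<bullet> b}"
  have "convex ?S"
    by (intro convex_linear_image linear_aggregate convex_positive_orthant)
  then have mix: "(u *\<^sub>R p + v *\<^sub>R p', total_supply) \<in> ?S"
    if "(p, total_supply) \<in> ?S" "(p', total_supply) \<in> ?S" "0 \<le> u" "0 \<le> v" "u + v = 1" for p p' u v
    using convexD[of ?S "(p, total_supply)" "(p', total_supply)" u v] that
    by (simp flip: scaleR_add_left)
  show ?thesis
    unfolding convex_def attainable_eq_slice vimage_eq using mix by blast
qed

lemma attainable_cost_nonneg:
  assumes "(z, r) \<in> attainable"
  shows "0 \<le> r"
proof -
  obtain x where "\<forall>k\<in>K. x k \<in> flows k" "(\<Sum>k\<in>K. cost c (x k)) \<le> r"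
    using assms unfolding attainable_def by blast
  moreover from this(1) have "0 \<le> (\<Sum>k\<in>K. cost c (x k))"
    using c_nonneg cost_nonneg by (intro sum_nonneg) blast
  ultimately show ?thesis
    by linarith
qed

lemma attainable_upward: "\<exists>r0. \<forall>z r. nonneg z \<longrightarrow> r0 \<le> r \<longrightarrow> (z, r) \<in> attainable"
proof -
  have "\<forall>k\<in>K. \<exists>x. x \<in> flows k \<and> toll x = 0"
    using untolled_flow by blast
  from bchoice[OF this] obtain x where x: "\<forall>k\<in>K. x k \<in> flows k \<and> toll (x k) = 0"
    by blast
  then have "(z, r) \<in> attainable" if "nonneg z" "(\<Sum>k\<in>K. cost c (x k)) \<le> r" for z r
    using that unfolding attainable_def nonneg_def by (auto intro!: exI[of _ x])
  then show ?thesis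
    by blast
qed

lemma min_cost_exists:
  assumes v: "nonneg v"
  shows "\<exists>r. (v, r) \<in> attainable \<and> (\<forall>r'. (v, r') \<in> attainable \<longrightarrow> r \<le> r')"
proof -
  define R where "R = {r. (v, r) \<in> attainable}"
  have "R \<noteq> {}"
    using attainable_upward v unfolding R_def by blast
  moreover have "bdd_below R"
    unfolding R_def using attainable_cost_nonneg by (intro bdd_belowI[of _ 0]) blast
  moreover have "closed R"
  proof -
    have "R = (\<lambda>r. (v, r)) -` attainable"
      by (auto simp: R_def)
    then show ?thesis
      using closed_attainable by (simp add: continuous_closed_vimage continuous_intros)
  qed
  ultimately have "Inf R \<in> R"
    by (rule closed_contains_Inf)
  moreover have "\<forall>r'\<in>R. Inf R \<le> r'"
    using \<open>bdd_below R\<close> by (simp add: cInf_lower)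
  ultimately show ?thesis
    unfolding R_def by blast
qed

lemma attainable_separator_pos:
  assumes v: "nonneg v" and below: "a1 \<bullet> v + \<beta> * \<gamma> < b"
    and sep: "\<And>z r. (z, r) \<in> attainable \<Longrightarrow> b < a1 \<bullet> z + \<beta> * r"
  shows "0 < \<beta>" and "0 \<le> a1 $ i"
proof -
  \<comment> \<open>\<open>attainable\<close> is closed upwards, and the untolled flows put some \<open>(0, r0)\<close> into it.\<close>
  obtain r0 where r0: "\<And>z r. nonneg z \<Longrightarrow> r0 \<le> r \<Longrightarrow> (z, r) \<in> attainable"
    using attainable_upward by blast
  have \<beta>: "0 \<le> \<beta>"
  proof (rule nonneg_if_bounded_below_on_ray)
    fix s :: real
    assume "0 \<le> s"
    then show "b < (a1 \<bullet> v + \<beta> * r0) + \<beta> * s"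
      using sep[OF r0[OF v, of "r0 + s"]] by (simp add: algebra_simps)
  qed
  have a1: "0 \<le> a1 $ j" for j
  proof (rule nonneg_if_bounded_below_on_ray)
    fix s :: real
    assume "0 \<le> s"
    then have "nonneg (v + s *\<^sub>R axis j 1)"
      using v by (simp add: nonneg_def axis_def)
    then show "b < (a1 \<bullet> v + \<beta> * r0) + a1 $ j * s"
      using sep[OF r0[of "v + s *\<^sub>R axis j 1" r0]] by (simp add: inner_add_right inner_axis algebra_simps)
  qed
  then show "0 \<le> a1 $ i" .
  have "\<beta> \<noteq> 0"
  proof
    assume "\<beta> = 0"
    moreover have "b < a1 \<bullet> 0 + \<beta> * r0"
      using sep[OF r0[of 0 r0]] by (simp add: nonneg_def)
    moreover have "0 \<le> a1 \<bullet> v"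
      using a1 v by (simp add: inner_nonneg_if_nonneg nonneg_def)
    ultimately show False
      using below by simp
  qed
  with \<beta> show "0 < \<beta>"
    by simp
qed

lemma separating_toll:
  assumes v: "nonneg v" and notin: "(v, \<gamma>) \<notin> attainable"
  shows "\<exists>t. nonneg t \<and> (\<forall>z r. (z, r) \<in> attainable \<longrightarrow> t \<bullet> v + \<gamma> \<le> t \<bullet> z + r)"
proof -
  obtain a1 \<beta> b where below: "a1 \<bullet> v + \<beta> * \<gamma> < b"
    and sep: "\<And>z r. (z, r) \<in> attainable \<Longrightarrow> b < a1 \<bullet> z + \<beta> * r"
    using separating_hyperplane_closed_point[OF convex_attainable closed_attainable notin]
    by (force simp: inner_Pair)
  note pos = attainable_separator_pos[OF v below sep]
  define t where "t = (1 / \<beta>) *\<^sub>R a1"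
  have "nonneg t"
    using pos by (simp add: t_def nonneg_def)
  moreover have "t \<bullet> v + \<gamma> \<le> t \<bullet> z + r" if "(z, r) \<in> attainable" for z r
  proof -
    have "(a1 \<bullet> v + \<beta> * \<gamma>) / \<beta> \<le> (a1 \<bullet> z + \<beta> * r) / \<beta>"
      using below sep[OF that] pos(1) by (simp add: divide_right_mono)
    then show ?thesis
      using pos(1) by (simp add: t_def add_divide_distrib)
  qed
  ultimately show ?thesis
    by blast
qed

lemma sum_f_ge_if_attainable_bound:
  assumes t: "nonneg t" and bound: "\<And>z r. (z, r) \<in> attainable \<Longrightarrow> L \<le> t \<bullet> z + r"
  shows "ereal L \<le> (\<Sum>k\<in>K. f k t)"
proof (rule ccontr)
  define \<phi> where "\<phi> k = real_of_ereal (f k t)" for k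
  have f: "f k t = ereal (\<phi> k)" if "k \<in> K" for k
    using f_finite[OF that t] by (simp add: \<phi>_def)
  assume "\<not> ereal L \<le> (\<Sum>k\<in>K. f k t)"
  moreover have "(\<Sum>k\<in>K. f k t) = ereal (\<Sum>k\<in>K. \<phi> k)"
    using f by simp
  ultimately have gap: "(\<Sum>k\<in>K. \<phi> k) < L"
    by simp
  define \<epsilon> where "\<epsilon> = (L - (\<Sum>k\<in>K. \<phi> k)) / (card K + 1)"
  have \<epsilon>: "0 < \<epsilon>" "card K * \<epsilon> < L - (\<Sum>k\<in>K. \<phi> k)"
    using gap by (simp_all add: \<epsilon>_def field_simps)
  have "\<exists>x\<in>flows k. cost c x + t \<bullet> toll x < \<phi> k + \<epsilon>" if k: "k \<in> K" for k
  proof -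
    have "(INF x\<in>flows k. ereal (cost c x + t \<bullet> toll x)) = ereal (\<phi> k)"
      using fk_eq_INF[OF t, of tail head c "orig k" "dest k"] f[OF k] by simp
    then have "(INF x\<in>flows k. ereal (cost c x + t \<bullet> toll x)) < ereal (\<phi> k + \<epsilon>)"
      using \<epsilon>(1) by simp
    then show ?thesis
      by (simp add: INF_less_iff)
  qed
  then obtain x where x: "\<forall>k\<in>K. x k \<in> flows k \<and> cost c (x k) + t \<bullet> toll (x k) < \<phi> k + \<epsilon>"
    using bchoice[of K "\<lambda>k x. x \<in> flows k \<and> cost c x + t \<bullet> toll x < \<phi> k + \<epsilon>"] by blast
  then have "((\<Sum>k\<in>K. toll (x k)), (\<Sum>k\<in>K. cost c (x k))) \<in> attainable"
    unfolding attainable_def by (auto intro!: exI[of _ x])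
  then have "L \<le> t \<bullet> (\<Sum>k\<in>K. toll (x k)) + (\<Sum>k\<in>K. cost c (x k))"
    by (rule bound)
  also have "\<dots> = (\<Sum>k\<in>K. cost c (x k) + t \<bullet> toll (x k))"
    by (simp add: inner_sum_right sum.distrib)
  also have "\<dots> \<le> (\<Sum>k\<in>K. \<phi> k + \<epsilon>)"
    using x by (intro sum_mono less_imp_le) auto
  also have "\<dots> = (\<Sum>k\<in>K. \<phi> k) + card K * \<epsilon>"
    by (simp add: sum.distrib)
  finally show False
    using \<epsilon> by linarith
qed

lemma min_cost_le_conj:
  assumes v: "nonneg v" and min: "\<And>r'. (v, r') \<in> attainable \<Longrightarrow> r \<le> r'"
  shows "ereal r \<le> conj_fun (\<lambda>t. \<Sum>k\<in>K. f k t) v"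
proof (rule ccontr)
  assume "\<not> ereal r \<le> conj_fun (\<lambda>t. \<Sum>k\<in>K. f k t) v"
  then have "conj_fun (\<lambda>t. \<Sum>k\<in>K. f k t) v < ereal r"
    by simp
  then obtain \<gamma> where \<gamma>: "conj_fun (\<lambda>t. \<Sum>k\<in>K. f k t) v < ereal \<gamma>" "ereal \<gamma> < ereal r"
    using ereal_dense2 by blast
  have "(v, \<gamma>) \<notin> attainable"
  proof
    assume "(v, \<gamma>) \<in> attainable"
    then have "r \<le> \<gamma>"
      by (rule min)
    then show False
      using \<gamma>(2) by simp
  qed
  then obtain t where t: "nonneg t"
    and sep: "\<And>z r. (z, r) \<in> attainable \<Longrightarrow> t \<bullet> v + \<gamma> \<le> t \<bullet> z + r"
    using separating_toll[OF v] by blast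
  have "ereal (t \<bullet> v + \<gamma>) \<le> (\<Sum>k\<in>K. f k t)"
    using sep by (rule sum_f_ge_if_attainable_bound[OF t])
  then have "ereal \<gamma> \<le> (\<Sum>k\<in>K. f k t) - ereal (t \<bullet> v)"
    by (cases "\<Sum>k\<in>K. f k t") auto
  also have "\<dots> \<le> conj_fun (\<lambda>t. \<Sum>k\<in>K. f k t) v"
    by (rule conj_fun_ge)
  finally show False
    using \<gamma>(1) by simp
qed

lemma conj_sum_f_nonneg: "0 \<le> conj_fun (\<lambda>t. \<Sum>k\<in>K. f k t) v"
proof -
  have "0 \<le> (\<Sum>k\<in>K. f k 0)"
    by (intro sum_nonneg f_nonneg) (simp add: nonneg_def)
  also have "\<dots> \<le> conj_fun (\<lambda>t. \<Sum>k\<in>K. f k t) v"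
    using conj_fun_ge[of "\<lambda>t. \<Sum>k\<in>K. f k t" 0 v] by simp
  finally show ?thesis .
qed

lemma optimal_decomposition_exists:
  assumes finite: "conj_fun (\<lambda>t. \<Sum>k\<in>K. f k t) v \<noteq> \<infinity>"
  shows "\<exists>W. decomposition K v W
    \<and> (\<Sum>k\<in>K. conj_fun (f k) (W k)) \<le> conj_fun (\<lambda>t. \<Sum>k\<in>K. f k t) v"
proof (cases "K = {}")
  case True
  have "0 \<le> d \<bullet> v" for d
    using inner_nonneg_if_conj_fun_finite[of "\<lambda>t. \<Sum>k\<in>K. f k t" d v] finite True by simp
  from this[of "- v"] have "v \<bullet> v = 0"
    using inner_ge_zero[of v] by simp
  then have "v = 0"
    by simp
  then have "decomposition K v (\<lambda>k. 0)"
    using True by (simp add: decomposition_def nonneg_def)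
  then show ?thesis
    using True conj_sum_f_nonneg by auto
next
  case False
  then obtain k0 where k0: "k0 \<in> K"
    by blast
  have v: "nonneg v"
  proof (rule nonneg_if_conj_fun_finite[of "\<lambda>t. \<Sum>k\<in>K. f k t"])
    show "0 \<le> (\<Sum>k\<in>K. f k t)" if "nonneg t" for t
      using that by (simp add: sum_nonneg f_nonneg)
  qed (rule finite)
  then obtain r where "(v, r) \<in> attainable" and min: "\<And>r'. (v, r') \<in> attainable \<Longrightarrow> r \<le> r'"
    using min_cost_exists by blast
  then obtain x where x: "\<forall>k\<in>K. x k \<in> flows k" "\<forall>i. (\<Sum>k\<in>K. toll (x k)) $ i \<le> v $ i"
    and cost: "(\<Sum>k\<in>K. cost c (x k)) \<le> r"
    unfolding attainable_def by blast
  have "\<And>k. k \<in> K \<Longrightarrow> nonneg (toll (x k))"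
    using x(1) toll_nonneg by blast
  then obtain W where W: "decomposition K v W" and xW: "\<forall>k\<in>K. \<forall>i. toll (x k) $ i \<le> W k $ i"
    using decomposition_dominating[OF finite_K k0, of "\<lambda>k. toll (x k)"] x(2) by blast
  have "(\<Sum>k\<in>K. conj_fun (f k) (W k)) \<le> (\<Sum>k\<in>K. ereal (cost c (x k)))"
    using x xW by (intro sum_mono conj_fk_le_cost) auto
  also have "\<dots> \<le> ereal r"
    using cost by simp
  also have "\<dots> \<le> conj_fun (\<lambda>t. \<Sum>k\<in>K. f k t) v"
    using min_cost_le_conj[OF v min] .
  finally show ?thesis
    using W by blast
qed

sublocale infimal_decomposition K "conj_fun (\<lambda>t. \<Sum>k\<in>K. f k t)" "\<lambda>k. conj_fun (f k)"
proof unfold_locales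
  show "finite K"
    by (rule finite_K)
  show "conj_fun (\<lambda>t. \<Sum>k\<in>K. f k t) v \<le> (\<Sum>k\<in>K. conj_fun (f k) (W k))"
    if "decomposition K v W" for v W
    using conj_fun_sum_le[of f K W] that by (simp add: decomposition_def)
  show "\<exists>W. decomposition K v W \<and> (\<Sum>k\<in>K. conj_fun (f k) (W k)) \<le> conj_fun (\<lambda>t. \<Sum>k\<in>K. f k t) v"
    if "conj_fun (\<lambda>t. \<Sum>k\<in>K. f k t) v \<noteq> \<infinity>" for v
    using that by (rule optimal_decomposition_exists)
  show "conj_fun (f k) v \<noteq> \<infinity> \<longleftrightarrow> nonneg v" if k: "k \<in> K" for k v
  proof
    show "conj_fun (f k) v \<noteq> \<infinity> \<Longrightarrow> nonneg v"
      using f_nonneg by (rule nonneg_if_conj_fun_finite)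
    assume "nonneg v"
    moreover obtain x where "x \<in> flows k" "toll x = 0"
      using untolled_flow[OF k] by blast
    ultimately have "conj_fun (f k) v \<le> ereal (cost c x)"
      by (intro conj_fk_le_cost) (auto simp: nonneg_def)
    then show "conj_fun (f k) v \<noteq> \<infinity>"
      by auto
  qed
  show "conj_fun (f k) v \<noteq> -\<infinity>" for k v
    using f_nonneg[of 0 k] by (intro conj_fun_not_MInf) (auto simp: nonneg_def)
  show "convex (epi (conj_fun (f k)))" for k
    by (rule convex_epi_conj_fun)
qed

end

theorem theorem4:
  fixes tail head :: "('t::finite + 'u::finite) \<Rightarrow> 'v::finite"
    and c :: "('t + 'u) \<Rightarrow> real"
    and K :: "'k set"
    and orig dest :: "'k \<Rightarrow> 'v"
    and w :: "real ^ 't"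
  defines "g \<equiv> conj_fun (\<lambda>t. \<Sum>k\<in>K. fk tail head c (orig k) (dest k) t)"
    and "gk \<equiv> (\<lambda>k. conj_fun (fk tail head c (orig k) (dest k)))"
  assumes c_nonneg: "\<forall>a. 0 \<le> c a"
    and K_finite: "finite K"
    and connected: "\<forall>k\<in>K. \<exists>p. is_path tail head p (orig k) (dest k) \<and> (\<forall>a\<in>set p. a \<notin> range Inl)"
    and w_nonneg: "nonneg w"
  shows "strongly_bf g w \<longleftrightarrow>
           (\<exists>W. decomposition K w W \<and> g w = (\<Sum>k\<in>K. gk k (W k))
              \<and> (\<forall>W'. decomposition K w W' \<and> g w = (\<Sum>k\<in>K. gk k (W' k)) \<longrightarrow> W' = W)
              \<and> (\<forall>k\<in>K. strongly_bf (gk k) (W k)))"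
proof -
  interpret toll_network tail head c K orig dest
    using c_nonneg K_finite connected by unfold_locales
  show ?thesis
    using strongly_bf_iff_unique_bilevel_feasible[of w]
    unfolding g_def gk_def bilevel_feasible_def by (simp only: conj_assoc)
qed

end
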